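(* Let $1\le p<\infty$ and $\eta\in(0,1)$. There exist $\beta\in(1/2,1)$ and $C_1>0$, depending only on $\eta$, such that for every $\varepsilon>0$, every $f\in\mathcal{H}(\mathbb{D})$ and every $\xi\in\mathbb{T}$, setting $$\mathcal{A}=\Big\{\alpha\in\mathbb{D}:\ (1-|\alpha|)^p|f'(\alpha)|^p<\frac{\varepsilon}{m(\Delta_\eta(\alpha))}\int_{\Delta_\eta(\alpha)}(1-|z|)^p|f'(z)|^p\,dm(z)\Big\},$$ we have $$\int_{\mathcal{A}\cap\Gamma_{1/2}(\xi)}(1-|z|)^p|f'(z)|^p\frac{dm(z)}{1-|z|}\ \le\ \varepsilon\, C_1\int_{\Gamma_\beta(\xi)}(1-|z|)^p|f'(z)|^p\frac{dm(z)}{1-|z|}.$$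
   Context: $\mathbb{D}$ is the unit disc, $\mathbb{T}$ the unit circle, $dm$ normalized area measure, $\mathcal{H}(\mathbb{D})$ the analytic functions on $\mathbb{D}$. For $\beta\in(0,1)$ and $\xi\in\mathbb{T}$, $\Gamma_\beta(\xi)=\{z\in\mathbb{D}:|z|<\beta\}\cup\bigcup_{|z|<\beta}[z,\xi)$, where $[z,\xi)$ is the half-open segment from $z$ to $\xi$. For $\alpha\in\mathbb{D}$, $\Delta_\eta(\alpha)=\{z\in\mathbb{D}:|z-\alpha|<\eta(1-|\alpha|)\}$. *)

theory Defs
  imports "HOL-Analysis.Analysis"
begin

definition unit_disc :: "complex set" where
  "unit_disc = ball 0 1"

text \<open>Normalized area measure dm = dA / pi on the complex plane.\<close>
definition marea :: "complex measure" where
  "marea = density lborel (\<lambda>_. ennreal (1 / pi))"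

definition Gamma_region :: "real \<Rightarrow> complex \<Rightarrow> complex set" where
  "Gamma_region \<beta> \<xi> =
     {z \<in> unit_disc. cmod z < \<beta>} \<union> (\<Union>w\<in>{w. cmod w < \<beta>}. closed_segment w \<xi> - {\<xi>})"

definition Delta_region :: "real \<Rightarrow> complex \<Rightarrow> complex set" where
  "Delta_region \<eta> \<alpha> = {z \<in> unit_disc. cmod (z - \<alpha>) < \<eta> * (1 - cmod \<alpha>)}"

end

theory Submission
  imports Defs "HOL-Complex_Analysis.Complex_Analysis"
begin

text \<open>
  Write \<open>h z = g z / (1 - |z|)\<close> for \<open>g z = (1 - |z|)\<^sup>p |f'(z)|\<^sup>p\<close>. For \<open>\<alpha> \<in> \<A>\<close> the defining
  inequality of \<open>\<A>\<close>, together with \<open>1 - |z| \<le> (1 + \<eta>)(1 - |\<alpha>|)\<close> on \<open>\<Delta>\<^sub>\<eta>(\<alpha>)\<close>, gives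
  \<open>h(\<alpha>) \<lesssim> \<epsilon> (1 - |\<alpha>|)\<^sup>-\<^sup>2 \<integral>\<^bsub>\<Delta>\<^sub>\<eta>(\<alpha>)\<^esub> h\<close>. Integrate this over \<open>\<alpha>\<close> in a Stolz angle
  containing \<open>\<Gamma>\<^bsub>1/2\<^esub>(\<xi>)\<close> and exchange the integrals: a point \<open>z\<close> is charged only by those \<open>\<alpha>\<close>
  with \<open>z \<in> \<Delta>\<^sub>\<eta>(\<alpha>)\<close>, which fill a disc of area \<open>\<approx> (1 - |z|)\<^sup>2\<close> and have
  \<open>1 - |\<alpha>| \<approx> 1 - |z|\<close>, and such \<open>z\<close> lie in a wider Stolz angle, which is contained in
  \<open>\<Gamma>\<^sub>\<beta>(\<xi>)\<close> for \<open>\<beta>\<close> close to 1. Holomorphy of \<open>f\<close> is only needed for measurability.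
\<close>

lemma sets_marea [simp, measurable_cong]: "sets marea = sets borel"
  unfolding marea_def by simp

lemma sigma_finite_marea: "sigma_finite_measure marea"
proof -
  have "sigma_finite_measure (lborel :: complex measure)" ..
  then show ?thesis
    unfolding marea_def by (subst sigma_finite_measure.sigma_finite_iff_density_finite) auto
qed

interpretation marea: sigma_finite_measure marea
  by (rule sigma_finite_marea)

interpretation marea_pair: pair_sigma_finite marea marea ..

lemma emeasure_marea_ball:
  assumes "0 \<le> r"
  shows "emeasure marea (ball (c :: complex) r) = ennreal (r^2)"
proof -
  have "emeasure marea (ball c r) = ennreal (1/pi) * emeasure lborel (ball c r)"
    unfolding marea_def by (rule emeasure_density_const) simp
  also have "\<dots> = ennreal (1/pi) * ennreal (pi * r^2)"
    using emeasure_ball[OF assms, of c] by (simp add: unit_ball_vol_2)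
  also have "\<dots> = ennreal (r^2)"
    by (simp add: ennreal_mult'[symmetric])
  finally show ?thesis .
qed

definition stolz_angle :: "real \<Rightarrow> complex \<Rightarrow> complex set" where
  "stolz_angle K \<xi> = {z. cmod (z - \<xi>) < K * (1 - cmod z)}"

lemma stolz_angle_measurable [measurable]: "stolz_angle K \<xi> \<in> sets borel"
  unfolding stolz_angle_def by measurable

lemma stolz_angle_norm_less_1:
  assumes "0 \<le> K" and "z \<in> stolz_angle K \<xi>"
  shows "cmod z < 1"
proof -
  have "cmod (z - \<xi>) < K * (1 - cmod z)"
    using assms(2) unfolding stolz_angle_def by simp
  then have "0 < K * (1 - cmod z)"
    using norm_ge_zero[of "z - \<xi>"] by linarith
  then show ?thesis
    using assms(1) by (simp add: zero_less_mult_iff)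
qed

lemma Gamma_region_subset_stolz_angle:
  assumes "0 \<le> \<beta>" "\<beta> < 1" and "cmod \<xi> = 1"
  shows "Gamma_region \<beta> \<xi> \<subseteq> stolz_angle ((1 + \<beta>) / (1 - \<beta>)) \<xi>"
proof
  fix z assume z: "z \<in> Gamma_region \<beta> \<xi>"
  have "cmod (z - \<xi>) < (1 + \<beta>) / (1 - \<beta>) * (1 - cmod z)"
  proof (cases "cmod z < \<beta>")
    case True
    have "cmod (z - \<xi>) < 1 + \<beta>"
      using norm_triangle_ineq4[of z \<xi>] True assms(3) by simp
    also have "\<dots> = (1 + \<beta>) / (1 - \<beta>) * (1 - \<beta>)"
      using assms(2) by simp
    also have "\<dots> \<le> (1 + \<beta>) / (1 - \<beta>) * (1 - cmod z)"
      using True assms(1,2) by (intro mult_left_mono) auto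
    finally show ?thesis .
  next
    case False
    then obtain w t where w: "cmod w < \<beta>" and t: "0 \<le> t" "t \<le> 1"
      and zt: "z = (1 - t) *\<^sub>R w + t *\<^sub>R \<xi>" and "z \<noteq> \<xi>"
      using z unfolding Gamma_region_def closed_segment_def by (auto simp: unit_disc_def)
    have "t \<noteq> 1"
      using zt \<open>z \<noteq> \<xi>\<close> by auto
    with t have t: "0 \<le> t" "t < 1"
      by auto
    have "z - \<xi> = (1 - t) *\<^sub>R (w - \<xi>)"
      using zt by (simp add: algebra_simps)
    then have "cmod (z - \<xi>) = (1 - t) * cmod (w - \<xi>)"
      using t by simp
    also have "\<dots> < (1 - t) * (1 + \<beta>)"
      using norm_triangle_ineq4[of w \<xi>] w t assms(3) by simp
    also have "\<dots> = (1 + \<beta>) / (1 - \<beta>) * ((1 - t) * (1 - \<beta>))"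
      using assms(2) by simp
    also have "\<dots> \<le> (1 + \<beta>) / (1 - \<beta>) * (1 - cmod z)"
    proof (rule mult_left_mono)
      have "cmod z \<le> (1 - t) * cmod w + t"
        using norm_triangle_ineq[of "(1 - t) *\<^sub>R w" "t *\<^sub>R \<xi>"] t assms(3) by (simp add: zt)
      then show "(1 - t) * (1 - \<beta>) \<le> 1 - cmod z"
        using w t mult_left_mono[of "cmod w" \<beta> "1 - t"] by (simp add: algebra_simps)
    qed (use assms(1,2) in simp)
    finally show ?thesis .
  qed
  then show "z \<in> stolz_angle ((1 + \<beta>) / (1 - \<beta>)) \<xi>"
    unfolding stolz_angle_def by simp
qed

lemma closed_segment_extension:
  fixes z \<xi> :: "'a :: real_vector"
  assumes "1 \<le> s"
  shows "z \<in> closed_segment (\<xi> + s *\<^sub>R (z - \<xi>)) \<xi>"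
proof -
  have "z = (1 - (1 - 1/s)) *\<^sub>R (\<xi> + s *\<^sub>R (z - \<xi>)) + (1 - 1/s) *\<^sub>R \<xi>"
    using assms by (simp add: algebra_simps)
  moreover have "0 \<le> 1 - 1/s" "1 - 1/s \<le> 1"
    using assms by auto
  ultimately show ?thesis
    unfolding closed_segment_def by blast
qed

lemma stolz_angle_ray_point_norm:
  assumes "cmod \<xi> = 1" "1 \<le> K" "z \<noteq> \<xi>" "z \<in> stolz_angle K \<xi>"
  shows "cmod (\<xi> + (1 / (K * cmod (z - \<xi>))) *\<^sub>R (z - \<xi>)) ^ 2 < 1 - 1 / K^2"
proof -
  define u where "u = z - \<xi>"
  define d where "d = cmod u"
  have d: "0 < d" and K: "0 < K"
    using assms(2,3) by (auto simp: d_def u_def)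
  have norm_sq: "(cmod (\<xi> + v))^2 = 1 + 2 * (\<xi> \<bullet> v) + (cmod v)^2" for v
    using dot_norm[of \<xi> v] assms(1) by simp
  have "cmod z < 1 - d / K"
    using assms(4) K unfolding stolz_angle_def u_def d_def by (simp add: field_simps)
  then have "(cmod z)^2 < (1 - d / K)^2"
    by (intro power_strict_mono) auto
  also have "\<dots> = 1 - 2 * d / K + d^2 / K^2"
    by (simp add: power2_diff power_divide)
  finally have R: "2 * (\<xi> \<bullet> u) < - 2 * d / K + d^2 / K^2 - d^2"
    using norm_sq[of u] by (simp add: u_def d_def)
  have "2 * (\<xi> \<bullet> u) / (K * d) < (- 2 * d / K + d^2 / K^2 - d^2) / (K * d)"
    using R d K by (intro divide_strict_right_mono) auto
  also have "\<dots> = - 2 / K^2 - d / K * (1 - 1 / K^2)"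
    using d K by (simp add: field_simps power2_eq_square)
  also have "\<dots> \<le> - 2 / K^2"
    using d K assms(2) by (simp add: power_le_one_iff)
  finally have "2 * (\<xi> \<bullet> u) / (K * d) < - 2 / K^2" .
  moreover have "cmod (\<xi> + (1 / (K * d)) *\<^sub>R u) ^ 2 = 1 + 2 * (\<xi> \<bullet> u) / (K * d) + 1 / K^2"
    using norm_sq[of "(1 / (K * d)) *\<^sub>R u"] d K by (simp add: d_def power_divide power_mult_distrib)
  ultimately show ?thesis
    by (simp add: u_def d_def)
qed

lemma stolz_angle_subset_Gamma_region:
  assumes "1 \<le> K" "cmod \<xi> = 1"
  shows "stolz_angle K \<xi> \<subseteq> Gamma_region (1 - 1 / (2 * K^2)) \<xi>"
proof
  fix z assume z: "z \<in> stolz_angle K \<xi>"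
  define \<beta> where "\<beta> = 1 - 1 / (2 * K^2)"
  have K: "1 \<le> K^2"
    using assms(1) by (simp add: one_le_power)
  have "1 / (2 * K^2) \<le> 1 / 2"
    using K by (intro divide_left_mono) auto
  then have \<beta>: "1/2 \<le> \<beta>"
    unfolding \<beta>_def by simp
  have z1: "cmod z < 1"
    using stolz_angle_norm_less_1[OF _ z] assms(1) by simp
  show "z \<in> Gamma_region \<beta> \<xi>"
  proof (cases "cmod z < \<beta>")
    case True
    moreover have "z \<in> unit_disc"
      using z1 by (simp add: unit_disc_def)
    ultimately show ?thesis
      unfolding Gamma_region_def by (intro UnI1) simp
  next
    case False
    define d where "d = cmod (z - \<xi>)"
    \<comment> \<open>the point at distance \<open>1/K\<close> from \<open>\<xi>\<close> on the ray through \<open>z\<close>; then \<open>z \<in> [w, \<xi>)\<close>\<close>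
    define w where "w = \<xi> + (1 / (K * d)) *\<^sub>R (z - \<xi>)"
    have "z \<noteq> \<xi>"
      using z1 assms(2) by auto
    have "(cmod w)^2 < 1 - 1 / K^2"
      unfolding w_def d_def by (rule stolz_angle_ray_point_norm[OF assms(2,1) \<open>z \<noteq> \<xi>\<close> z])
    also have "\<dots> = 1 - 2 * (1 / (2 * K^2))"
      by simp
    also have "\<dots> \<le> \<beta>^2"
      unfolding \<beta>_def by (simp add: power2_diff)
    finally have "(cmod w)^2 < \<beta>^2" .
    then have "cmod w < \<beta>"
      by (rule power_less_imp_less_base) (use \<beta> in simp)
    have "d < K * (1 - cmod z)"
      using z unfolding stolz_angle_def d_def by simp
    also have "\<dots> \<le> K * (1 - \<beta>)"
      using False assms(1) by (intro mult_left_mono) auto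
    also have "\<dots> = 1 / (2 * K)"
      unfolding \<beta>_def using assms(1) by (simp add: power2_eq_square)
    finally have "1 \<le> 1 / (K * d)"
      using assms(1) \<open>z \<noteq> \<xi>\<close> unfolding d_def by (simp add: field_simps)
    then have "z \<in> closed_segment w \<xi>"
      unfolding w_def by (rule closed_segment_extension)
    with \<open>cmod w < \<beta>\<close> \<open>z \<noteq> \<xi>\<close> show ?thesis
      unfolding Gamma_region_def by (intro UnI2 UN_I[of w]) auto
  qed
qed

lemma Delta_region_eq_ball:
  assumes "0 \<le> \<eta>" "\<eta> \<le> 1"
  shows "Delta_region \<eta> \<alpha> = ball \<alpha> (\<eta> * (1 - cmod \<alpha>))"
proof (intro set_eqI iffI)
  fix z assume "z \<in> ball \<alpha> (\<eta> * (1 - cmod \<alpha>))"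
  then have z: "cmod (z - \<alpha>) < \<eta> * (1 - cmod \<alpha>)"
    by (simp add: dist_norm norm_minus_commute)
  then have "0 < \<eta> * (1 - cmod \<alpha>)"
    using norm_ge_zero[of "z - \<alpha>"] by linarith
  then have "0 < 1 - cmod \<alpha>"
    using assms(1) by (simp add: zero_less_mult_iff)
  then have "\<eta> * (1 - cmod \<alpha>) \<le> 1 - cmod \<alpha>"
    using assms(2) by simp
  then have "cmod z < 1"
    using z norm_triangle_ineq2[of z \<alpha>] by linarith
  with z show "z \<in> Delta_region \<eta> \<alpha>"
    by (simp add: Delta_region_def unit_disc_def)
qed (simp add: Delta_region_def dist_norm norm_minus_commute)

lemma Delta_region_boundary_dist_le:
  "z \<in> Delta_region \<eta> \<alpha> \<Longrightarrow> 1 - cmod z \<le> (1 + \<eta>) * (1 - cmod \<alpha>)"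
  using norm_triangle_ineq2[of \<alpha> z]
  by (simp add: Delta_region_def norm_minus_commute algebra_simps)

lemma Delta_region_boundary_dist_ge:
  "z \<in> Delta_region \<eta> \<alpha> \<Longrightarrow> (1 - \<eta>) * (1 - cmod \<alpha>) \<le> 1 - cmod z"
  using norm_triangle_ineq2[of z \<alpha>]
  by (simp add: Delta_region_def algebra_simps)

lemma stolz_angle_Delta_region:
  assumes "0 \<le> K" "\<eta> < 1" and \<alpha>: "\<alpha> \<in> stolz_angle K \<xi>" and z: "z \<in> Delta_region \<eta> \<alpha>"
  shows "z \<in> stolz_angle ((K + \<eta>) / (1 - \<eta>)) \<xi>"
proof -
  have za: "cmod (z - \<alpha>) < \<eta> * (1 - cmod \<alpha>)"
    using z by (simp add: Delta_region_def)
  have a: "0 < 1 - cmod \<alpha>"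
    using stolz_angle_norm_less_1[OF assms(1) \<alpha>] by simp
  have "0 < \<eta> * (1 - cmod \<alpha>)"
    using za norm_ge_zero[of "z - \<alpha>"] by linarith
  then have "0 < \<eta>"
    using a by (simp add: zero_less_mult_iff)
  have "1 - cmod \<alpha> \<le> (1 - cmod z) / (1 - \<eta>)"
    using Delta_region_boundary_dist_ge[OF z] assms(2) by (simp add: field_simps)
  have "cmod (z - \<xi>) \<le> cmod (\<alpha> - \<xi>) + cmod (z - \<alpha>)"
    using norm_triangle_ineq[of "\<alpha> - \<xi>" "z - \<alpha>"] by simp
  also have "\<dots> < (K + \<eta>) * (1 - cmod \<alpha>)"
    using \<alpha> za unfolding stolz_angle_def by (simp add: distrib_right)
  also have "\<dots> \<le> (K + \<eta>) * ((1 - cmod z) / (1 - \<eta>))"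
    using \<open>1 - cmod \<alpha> \<le> _\<close> \<open>0 < \<eta>\<close> assms(1) by (intro mult_left_mono) auto
  finally show ?thesis
    unfolding stolz_angle_def by simp
qed

lemma Delta_region_measurable [measurable]: "Delta_region \<eta> \<alpha> \<in> sets borel"
  unfolding Delta_region_def unit_disc_def by measurable

lemma indicator_Delta_region_measurable [measurable]:
  "(\<lambda>(\<alpha>, z). indicator (Delta_region \<eta> \<alpha>) z :: ennreal) \<in> borel_measurable (marea \<Otimes>\<^sub>M marea)"
proof -
  have "(\<lambda>(\<alpha>, z). indicator (Delta_region \<eta> \<alpha>) z :: ennreal) =
      (\<lambda>(\<alpha>, z). if cmod z < 1 \<and> cmod (z - \<alpha>) < \<eta> * (1 - cmod \<alpha>) then 1 else 0)"
    by (auto simp: fun_eq_iff Delta_region_def unit_disc_def indicator_def)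
  also have "\<dots> \<in> borel_measurable (marea \<Otimes>\<^sub>M marea)"
    by measurable
  finally show ?thesis .
qed

lemma borel_measurable_weighted_deriv:
  assumes "f holomorphic_on unit_disc" "0 < p"
  shows "(\<lambda>z. ennreal ((1 - cmod z) powr p * cmod (deriv f z) powr p / (1 - cmod z)))
           \<in> borel_measurable borel"
proof -
  have op: "open unit_disc"
    unfolding unit_disc_def by simp
  have pos: "\<And>z. z \<in> unit_disc \<Longrightarrow> 0 < 1 - cmod z"
    unfolding unit_disc_def by simp
  have "continuous_on unit_disc (deriv f)"
    using holomorphic_deriv[OF assms(1) op] holomorphic_on_imp_continuous_on by blast
  then have "continuous_on unit_disc (\<lambda>z. cmod (deriv f z) powr p)"
    using assms(2) by (intro continuous_on_powr' continuous_on_norm continuous_on_const) auto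
  moreover have "continuous_on unit_disc (\<lambda>z. (1 - cmod z) powr p)"
    using assms(2) pos by (intro continuous_on_powr' continuous_intros) (auto intro: less_imp_le)
  moreover have "continuous_on unit_disc (\<lambda>z. 1 - cmod z)"
    by (intro continuous_intros)
  ultimately have "continuous_on unit_disc
      (\<lambda>z. (1 - cmod z) powr p * cmod (deriv f z) powr p / (1 - cmod z))"
    using pos by (intro continuous_on_divide continuous_on_mult) force+
  then have "(\<lambda>z. indicator unit_disc z *\<^sub>R ((1 - cmod z) powr p * cmod (deriv f z) powr p / (1 - cmod z)))
      \<in> borel_measurable borel"
    using op by (intro borel_measurable_continuous_on_indicator) simp_all
  then have "(\<lambda>z. ennreal (indicator unit_disc z * ((1 - cmod z) powr p * cmod (deriv f z) powr p / (1 - cmod z))))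
      \<in> borel_measurable borel"
    by simp
  \<comment> \<open>off the disc the quotient is nonpositive, so \<open>ennreal\<close> truncates it to 0\<close>
  moreover have "ennreal (indicator unit_disc z * ((1 - cmod z) powr p * cmod (deriv f z) powr p / (1 - cmod z)))
      = ennreal ((1 - cmod z) powr p * cmod (deriv f z) powr p / (1 - cmod z))" for z
    by (cases "z \<in> unit_disc") (simp_all add: unit_disc_def ennreal_neg divide_nonneg_nonpos)
  ultimately show ?thesis
    by simp
qed

text \<open>The set \<open>\<A>\<close> of the theorem, for an arbitrary weight \<open>g\<close> in place of \<open>(1 - |z|)\<^sup>p |f'(z)|\<^sup>p\<close>.\<close>

definition small_average_set :: "real \<Rightarrow> real \<Rightarrow> (complex \<Rightarrow> real) \<Rightarrow> complex set" where
  "small_average_set \<eta> \<epsilon> g = {\<alpha> \<in> unit_disc.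
     ennreal (g \<alpha>) < ennreal \<epsilon> / emeasure marea (Delta_region \<eta> \<alpha>) *
       (\<integral>\<^sup>+ z. indicator (Delta_region \<eta> \<alpha>) z * ennreal (g z) \<partial>marea)}"

lemma small_average_set_pointwise_le:
  fixes g :: "complex \<Rightarrow> real"
  assumes \<eta>: "0 < \<eta>" "\<eta> < 1" and g: "\<And>z. 0 \<le> g z"
    and h: "(\<lambda>z. ennreal (g z / (1 - cmod z))) \<in> borel_measurable borel"
    and \<alpha>: "\<alpha> \<in> small_average_set \<eta> \<epsilon> g"
  shows "ennreal (g \<alpha> / (1 - cmod \<alpha>)) \<le> ennreal (\<epsilon> * (1 + \<eta>) / \<eta>^2 / (1 - cmod \<alpha>)^2) *
           (\<integral>\<^sup>+ z. indicator (Delta_region \<eta> \<alpha>) z * ennreal (g z / (1 - cmod z)) \<partial>marea)"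
proof -
  define a where "a = 1 - cmod \<alpha>"
  define I where "I = (\<integral>\<^sup>+ z. indicator (Delta_region \<eta> \<alpha>) z * ennreal (g z) \<partial>marea)"
  define J where "J = (\<integral>\<^sup>+ z. indicator (Delta_region \<eta> \<alpha>) z * ennreal (g z / (1 - cmod z)) \<partial>marea)"
  have [measurable]: "(\<lambda>z. ennreal (g z / (1 - cmod z))) \<in> borel_measurable marea"
    using h by (simp add: measurable_cong_sets[OF sets_marea refl])
  have a: "0 < a"
    using \<alpha> by (simp add: small_average_set_def unit_disc_def a_def)
  have "emeasure marea (Delta_region \<eta> \<alpha>) = ennreal ((\<eta> * a)^2)"
    using \<eta> a by (simp add: Delta_region_eq_ball emeasure_marea_ball a_def)
  then have small: "ennreal (g \<alpha>) < ennreal \<epsilon> / ennreal ((\<eta> * a)^2) * I"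
    using \<alpha> by (simp add: small_average_set_def I_def)
  have \<epsilon>: "0 \<le> \<epsilon>"
    using small by (cases "0 \<le> \<epsilon>") (simp_all add: ennreal_neg)
  have "I \<le> (\<integral>\<^sup>+ z. ennreal ((1 + \<eta>) * a) *
                 (indicator (Delta_region \<eta> \<alpha>) z * ennreal (g z / (1 - cmod z))) \<partial>marea)"
    unfolding I_def
  proof (intro nn_integral_mono)
    fix z
    show "indicator (Delta_region \<eta> \<alpha>) z * ennreal (g z) \<le>
          ennreal ((1 + \<eta>) * a) * (indicator (Delta_region \<eta> \<alpha>) z * ennreal (g z / (1 - cmod z)))"
    proof (cases "z \<in> Delta_region \<eta> \<alpha>")
      case True
      then have b: "0 < 1 - cmod z"
        by (simp add: Delta_region_def unit_disc_def)
      have "g z = (1 - cmod z) * (g z / (1 - cmod z))"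
        using b by simp
      also have "\<dots> \<le> ((1 + \<eta>) * a) * (g z / (1 - cmod z))"
        using Delta_region_boundary_dist_le[OF True] g[of z] b
        by (intro mult_right_mono) (simp_all add: a_def)
      finally show ?thesis
        using True g[of z] b \<eta> a by (simp add: ennreal_mult[symmetric] ennreal_leI)
    qed simp
  qed
  also have "\<dots> = ennreal ((1 + \<eta>) * a) * J"
    unfolding J_def by (intro nn_integral_cmult) measurable
  finally have IJ: "I \<le> ennreal ((1 + \<eta>) * a) * J" .
  have "ennreal (g \<alpha> / a) = ennreal (g \<alpha>) * ennreal (1 / a)"
    using g[of \<alpha>] a by (simp add: ennreal_mult[symmetric])
  also have "\<dots> \<le> ennreal \<epsilon> / ennreal ((\<eta> * a)^2) * I * ennreal (1 / a)"
    using small by (intro mult_right_mono) auto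
  also have "\<dots> \<le> ennreal \<epsilon> / ennreal ((\<eta> * a)^2) * (ennreal ((1 + \<eta>) * a) * J) * ennreal (1 / a)"
    using IJ by (intro mult_right_mono mult_left_mono) auto
  also have "\<dots> = ennreal (\<epsilon> / (\<eta> * a)^2 * ((1 + \<eta>) * a) * (1 / a)) * J"
    using \<epsilon> \<eta> a by (simp add: divide_ennreal ennreal_mult[symmetric] mult_ac)
  also have "\<epsilon> / (\<eta> * a)^2 * ((1 + \<eta>) * a) * (1 / a) = \<epsilon> * (1 + \<eta>) / \<eta>^2 / a^2"
    using a \<eta> by (simp add: field_simps power2_eq_square)
  finally show ?thesis
    by (simp add: a_def J_def)
qed

lemma nn_integral_Delta_region_kernel_le:
  assumes \<eta>: "0 < \<eta>" "\<eta> < 1" and K: "0 \<le> K"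
  shows "(\<integral>\<^sup>+ \<alpha>. indicator (stolz_angle K \<xi>) \<alpha> * ennreal (1 / (1 - cmod \<alpha>)^2) *
             indicator (Delta_region \<eta> \<alpha>) z \<partial>marea)
         \<le> ennreal ((1 + \<eta>)^2 * \<eta>^2 / (1 - \<eta>)^2) * indicator (stolz_angle ((K + \<eta>) / (1 - \<eta>)) \<xi>) z"
proof (cases "z \<in> stolz_angle ((K + \<eta>) / (1 - \<eta>)) \<xi>")
  case False
  then have zero: "indicator (stolz_angle K \<xi>) \<alpha> * ennreal (1 / (1 - cmod \<alpha>)^2) *
      indicator (Delta_region \<eta> \<alpha>) z = 0" for \<alpha>
    using stolz_angle_Delta_region[OF K \<eta>(2), of \<alpha> \<xi> z] by (auto simp: indicator_def)
  have "(\<integral>\<^sup>+ \<alpha>. indicator (stolz_angle K \<xi>) \<alpha> * ennreal (1 / (1 - cmod \<alpha>)^2) *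
             indicator (Delta_region \<eta> \<alpha>) z \<partial>marea) = (\<integral>\<^sup>+ \<alpha>. 0 \<partial>marea)"
    by (rule nn_integral_cong) (rule zero)
  then show ?thesis
    by simp
next
  case True
  define b where "b = 1 - cmod z"
  define r where "r = \<eta> * b / (1 - \<eta>)"
  have b: "0 < b"
    using stolz_angle_norm_less_1[OF _ True] K \<eta> by (simp add: b_def)
  have "(\<integral>\<^sup>+ \<alpha>. indicator (stolz_angle K \<xi>) \<alpha> * ennreal (1 / (1 - cmod \<alpha>)^2) *
             indicator (Delta_region \<eta> \<alpha>) z \<partial>marea)
        \<le> (\<integral>\<^sup>+ \<alpha>. ennreal ((1 + \<eta>)^2 / b^2) * indicator (ball z r) \<alpha> \<partial>marea)"
  proof (intro nn_integral_mono)
    fix \<alpha>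
    show "indicator (stolz_angle K \<xi>) \<alpha> * ennreal (1 / (1 - cmod \<alpha>)^2) * indicator (Delta_region \<eta> \<alpha>) z
          \<le> ennreal ((1 + \<eta>)^2 / b^2) * indicator (ball z r) \<alpha>"
    proof (cases "\<alpha> \<in> stolz_angle K \<xi> \<and> z \<in> Delta_region \<eta> \<alpha>")
      case True
      then have z: "z \<in> Delta_region \<eta> \<alpha>"
        by simp
      define a where "a = 1 - cmod \<alpha>"
      have a: "0 < a"
        using True stolz_angle_norm_less_1[OF K, of \<alpha> \<xi>] by (simp add: a_def)
      have "a \<le> b / (1 - \<eta>)"
        using Delta_region_boundary_dist_ge[OF z] \<eta> by (simp add: a_def b_def field_simps)
      have "cmod (z - \<alpha>) < \<eta> * a"
        using z by (simp add: Delta_region_def a_def)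
      also have "\<dots> \<le> \<eta> * (b / (1 - \<eta>))"
        using \<open>a \<le> b / (1 - \<eta>)\<close> \<eta> by (intro mult_left_mono) auto
      finally have "cmod (z - \<alpha>) < r"
        by (simp add: r_def)
      then have "\<alpha> \<in> ball z r"
        by (simp add: dist_norm norm_minus_commute)
      have "b / (1 + \<eta>) \<le> a"
        using Delta_region_boundary_dist_le[OF z] \<eta> by (simp add: a_def b_def field_simps)
      then have "(b / (1 + \<eta>))^2 \<le> a^2"
        using b \<eta> by (intro power_mono) auto
      then have "1 / a^2 \<le> (1 + \<eta>)^2 / b^2"
        using a b \<eta> by (simp add: field_simps)
      with True \<open>\<alpha> \<in> ball z r\<close> show ?thesis
        by (simp add: a_def ennreal_leI)
    qed (auto simp: indicator_def)
  qed
  also have "\<dots> = ennreal ((1 + \<eta>)^2 / b^2) * emeasure marea (ball z r)"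
    by (intro nn_integral_cmult_indicator) simp
  also have "\<dots> = ennreal ((1 + \<eta>)^2 / b^2 * r^2)"
    using b \<eta> by (simp add: emeasure_marea_ball r_def ennreal_mult[symmetric])
  also have "(1 + \<eta>)^2 / b^2 * r^2 = (1 + \<eta>)^2 * \<eta>^2 / (1 - \<eta>)^2"
    using b by (simp add: r_def power_divide power_mult_distrib)
  finally show ?thesis
    using True by simp
qed

lemma nn_integral_small_average_set_stolz_angle_le:
  fixes g :: "complex \<Rightarrow> real"
  assumes \<eta>: "0 < \<eta>" "\<eta> < 1" and \<epsilon>: "0 \<le> \<epsilon>" and K: "0 \<le> K" and g: "\<And>z. 0 \<le> g z"
    and h: "(\<lambda>z. ennreal (g z / (1 - cmod z))) \<in> borel_measurable borel"
  shows "(\<integral>\<^sup>+ \<alpha>. indicator (small_average_set \<eta> \<epsilon> g \<inter> stolz_angle K \<xi>) \<alpha> *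
             ennreal (g \<alpha> / (1 - cmod \<alpha>)) \<partial>marea)
         \<le> ennreal (\<epsilon> * (1 + \<eta>)^3 / (1 - \<eta>)^2) *
           (\<integral>\<^sup>+ z. indicator (stolz_angle ((K + \<eta>) / (1 - \<eta>)) \<xi>) z *
              ennreal (g z / (1 - cmod z)) \<partial>marea)"
proof -
  define H where "H z = ennreal (g z / (1 - cmod z))" for z
  define c0 where "c0 = \<epsilon> * (1 + \<eta>) / \<eta>^2"
  define c1 where "c1 = (1 + \<eta>)^2 * \<eta>^2 / (1 - \<eta>)^2"
  define k where "k \<alpha> z = indicator (stolz_angle K \<xi>) \<alpha> * ennreal (1 / (1 - cmod \<alpha>)^2) *
    indicator (Delta_region \<eta> \<alpha>) z" for \<alpha> z
  have c: "0 \<le> c0" "0 \<le> c1"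
    using \<epsilon> \<eta> by (simp_all add: c0_def c1_def)
  have [measurable]: "H \<in> borel_measurable marea"
    using h unfolding H_def[abs_def] by (simp add: measurable_cong_sets[OF sets_marea refl])
  have [measurable]: "case_prod k \<in> borel_measurable (marea \<Otimes>\<^sub>M marea)"
    unfolding k_def by measurable
  have "indicator (small_average_set \<eta> \<epsilon> g \<inter> stolz_angle K \<xi>) \<alpha> * H \<alpha>
        \<le> (\<integral>\<^sup>+ z. ennreal c0 * H z * k \<alpha> z \<partial>marea)" for \<alpha>
  proof (cases "\<alpha> \<in> small_average_set \<eta> \<epsilon> g \<inter> stolz_angle K \<xi>")
    case True
    have "(\<integral>\<^sup>+ z. ennreal c0 * H z * k \<alpha> z \<partial>marea) =
          (\<integral>\<^sup>+ z. ennreal (c0 / (1 - cmod \<alpha>)^2) * (indicator (Delta_region \<eta> \<alpha>) z * H z) \<partial>marea)"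
      using True \<epsilon> \<eta> by (intro nn_integral_cong) (simp add: k_def c0_def ennreal_mult[symmetric] mult_ac)
    also have "\<dots> = ennreal (c0 / (1 - cmod \<alpha>)^2) * (\<integral>\<^sup>+ z. indicator (Delta_region \<eta> \<alpha>) z * H z \<partial>marea)"
      by (intro nn_integral_cmult) measurable
    finally show ?thesis
      using small_average_set_pointwise_le[OF \<eta> g h, of \<alpha> \<epsilon>] True by (simp add: H_def c0_def)
  qed simp
  then have "(\<integral>\<^sup>+ \<alpha>. indicator (small_average_set \<eta> \<epsilon> g \<inter> stolz_angle K \<xi>) \<alpha> * H \<alpha> \<partial>marea)
        \<le> (\<integral>\<^sup>+ \<alpha>. \<integral>\<^sup>+ z. ennreal c0 * H z * k \<alpha> z \<partial>marea \<partial>marea)"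
    by (intro nn_integral_mono)
  also have "\<dots> = (\<integral>\<^sup>+ z. \<integral>\<^sup>+ \<alpha>. ennreal c0 * H z * k \<alpha> z \<partial>marea \<partial>marea)"
    by (intro marea_pair.Fubini') measurable
  also have "\<dots> = (\<integral>\<^sup>+ z. ennreal c0 * H z * (\<integral>\<^sup>+ \<alpha>. k \<alpha> z \<partial>marea) \<partial>marea)"
    by (intro nn_integral_cong nn_integral_cmult) measurable
  also have "\<dots> \<le> (\<integral>\<^sup>+ z. ennreal c0 * H z * (ennreal c1 * indicator (stolz_angle ((K + \<eta>) / (1 - \<eta>)) \<xi>) z) \<partial>marea)"
    using nn_integral_Delta_region_kernel_le[OF \<eta> K]
    by (intro nn_integral_mono mult_left_mono) (simp_all add: k_def c1_def)
  also have "\<dots> = (\<integral>\<^sup>+ z. ennreal (c0 * c1) * (indicator (stolz_angle ((K + \<eta>) / (1 - \<eta>)) \<xi>) z * H z) \<partial>marea)"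
    using c by (intro nn_integral_cong) (simp add: ennreal_mult mult_ac)
  also have "\<dots> = ennreal (c0 * c1) * (\<integral>\<^sup>+ z. indicator (stolz_angle ((K + \<eta>) / (1 - \<eta>)) \<xi>) z * H z \<partial>marea)"
    by (intro nn_integral_cmult) measurable
  also have "c0 * c1 = \<epsilon> * (1 + \<eta>)^3 / (1 - \<eta>)^2"
  proof -
    have "\<eta> \<noteq> 0" "1 - \<eta> \<noteq> 0"
      using \<eta> by auto
    then show ?thesis
      by (simp add: c0_def c1_def power2_eq_square power3_eq_cube)
  qed
  finally show ?thesis
    by (simp add: H_def)
qed

lemma nn_integral_small_average_set_Gamma_region_le:
  fixes g :: "complex \<Rightarrow> real"
  assumes \<eta>: "0 < \<eta>" "\<eta> < 1" and \<epsilon>: "0 \<le> \<epsilon>" and \<xi>: "cmod \<xi> = 1" and g: "\<And>z. 0 \<le> g z"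
    and h: "(\<lambda>z. ennreal (g z / (1 - cmod z))) \<in> borel_measurable borel"
  defines "K \<equiv> (3 + \<eta>) / (1 - \<eta>)"
  shows "(\<integral>\<^sup>+ z. indicator (small_average_set \<eta> \<epsilon> g \<inter> Gamma_region (1/2) \<xi>) z *
             ennreal (g z / (1 - cmod z)) \<partial>marea)
         \<le> ennreal (\<epsilon> * (1 + \<eta>)^3 / (1 - \<eta>)^2) *
           (\<integral>\<^sup>+ z. indicator (Gamma_region (1 - 1 / (2 * K^2)) \<xi>) z *
              ennreal (g z / (1 - cmod z)) \<partial>marea)"
proof -
  let ?h = "\<lambda>z. ennreal (g z / (1 - cmod z))"
  have "Gamma_region (1/2) \<xi> \<subseteq> stolz_angle 3 \<xi>"
    using Gamma_region_subset_stolz_angle[of "1/2" \<xi>] \<xi> by simp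
  then have "(\<integral>\<^sup>+ z. indicator (small_average_set \<eta> \<epsilon> g \<inter> Gamma_region (1/2) \<xi>) z * ?h z \<partial>marea)
      \<le> (\<integral>\<^sup>+ z. indicator (small_average_set \<eta> \<epsilon> g \<inter> stolz_angle 3 \<xi>) z * ?h z \<partial>marea)"
    by (intro nn_integral_mono mult_right_mono) (auto split: split_indicator)
  also have "\<dots> \<le> ennreal (\<epsilon> * (1 + \<eta>)^3 / (1 - \<eta>)^2) *
      (\<integral>\<^sup>+ z. indicator (stolz_angle K \<xi>) z * ?h z \<partial>marea)"
    using nn_integral_small_average_set_stolz_angle_le[OF \<eta> \<epsilon> _ g h, of 3 \<xi>] by (simp add: K_def)
  also have "\<dots> \<le> ennreal (\<epsilon> * (1 + \<eta>)^3 / (1 - \<eta>)^2) *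
      (\<integral>\<^sup>+ z. indicator (Gamma_region (1 - 1 / (2 * K^2)) \<xi>) z * ?h z \<partial>marea)"
  proof -
    have "stolz_angle K \<xi> \<subseteq> Gamma_region (1 - 1 / (2 * K^2)) \<xi>"
      using \<eta> \<xi> by (intro stolz_angle_subset_Gamma_region) (simp_all add: K_def field_simps)
    then show ?thesis
      by (intro mult_left_mono nn_integral_mono mult_right_mono) (auto split: split_indicator)
  qed
  finally show ?thesis .
qed

theorem lemma3:
  fixes \<eta> :: real
  assumes "0 < \<eta>" and "\<eta> < 1"
  shows "\<exists>\<beta> C1. 1/2 < \<beta> \<and> \<beta> < 1 \<and> 0 < C1 \<and>
    (\<forall>(p::real) (\<epsilon>::real) (f::complex \<Rightarrow> complex) (\<xi>::complex).
       1 \<le> p \<longrightarrow> 0 < \<epsilon> \<longrightarrow> f holomorphic_on unit_disc \<longrightarrow> cmod \<xi> = 1 \<longrightarrow>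
       (let A = {\<alpha> \<in> unit_disc.
                   ennreal ((1 - cmod \<alpha>) powr p * cmod (deriv f \<alpha>) powr p)
                   < ennreal \<epsilon> / emeasure marea (Delta_region \<eta> \<alpha>) *
                     (\<integral>\<^sup>+ z. indicator (Delta_region \<eta> \<alpha>) z *
                        ennreal ((1 - cmod z) powr p * cmod (deriv f z) powr p) \<partial>marea)}
        in (\<integral>\<^sup>+ z. indicator (A \<inter> Gamma_region (1/2) \<xi>) z *
               ennreal ((1 - cmod z) powr p * cmod (deriv f z) powr p / (1 - cmod z)) \<partial>marea)
           \<le> ennreal \<epsilon> * ennreal C1 *
             (\<integral>\<^sup>+ z. indicator (Gamma_region \<beta> \<xi>) z *
               ennreal ((1 - cmod z) powr p * cmod (deriv f z) powr p / (1 - cmod z)) \<partial>marea)))"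
proof -
  define K where "K = (3 + \<eta>) / (1 - \<eta>)"
  define \<beta> where "\<beta> = 1 - 1 / (2 * K^2)"
  define C1 where "C1 = (1 + \<eta>)^3 / (1 - \<eta>)^2"
  have "3 \<le> K"
    using assms by (simp add: K_def field_simps)
  then have "1 / (2 * K^2) < 1 / 2" "0 < 1 / (2 * K^2)"
    by (auto simp: power2_eq_square intro!: divide_strict_left_mono less_1_mult)
  then have \<beta>: "1/2 < \<beta>" "\<beta> < 1"
    by (simp_all add: \<beta>_def)
  have C1: "0 < C1"
    using assms by (simp add: C1_def)
  have "(let A = small_average_set \<eta> \<epsilon> (\<lambda>z. (1 - cmod z) powr p * cmod (deriv f z) powr p)
         in (\<integral>\<^sup>+ z. indicator (A \<inter> Gamma_region (1/2) \<xi>) z *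
               ennreal ((1 - cmod z) powr p * cmod (deriv f z) powr p / (1 - cmod z)) \<partial>marea)
           \<le> ennreal \<epsilon> * ennreal C1 *
             (\<integral>\<^sup>+ z. indicator (Gamma_region \<beta> \<xi>) z *
               ennreal ((1 - cmod z) powr p * cmod (deriv f z) powr p / (1 - cmod z)) \<partial>marea))"
    if "1 \<le> p" "0 < \<epsilon>" "f holomorphic_on unit_disc" "cmod \<xi> = 1" for p \<epsilon> f \<xi>
  proof -
    have "ennreal (\<epsilon> * (1 + \<eta>)^3 / (1 - \<eta>)^2) = ennreal \<epsilon> * ennreal C1"
      using that(2) C1 by (simp add: C1_def flip: ennreal_mult)
    then show ?thesis
      using nn_integral_small_average_set_Gamma_region_le[OF assms _ that(4) _
          borel_measurable_weighted_deriv[OF that(3)], of \<epsilon>] that(1,2)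
      by (simp add: Let_def \<beta>_def K_def)
  qed
  with \<beta> C1 show ?thesis
    unfolding small_average_set_def by blast
qed

end
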